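(* Let $\Delta=\Delta(n)$ satisfy $\Delta\ge 3$ and $\Delta=o(n^{1/2})$. Any algorithm that, given a vertex set $V$ with $|V|=n$ and a distance oracle for an unknown connected graph $G=(V,E)$ of maximum degree at most $\Delta$, always outputs $E$, must make $\Omega(\Delta n\log n/\log\log n)$ distance queries on some such graph $G$.
   Context: A distance oracle for $G$ receives a pair $(u,v)\in V^2$ and returns the number of edges on a shortest path between $u$ and $v$ in $G$. Graphs are unweighted, undirected and simple. *)

theory Defs
  imports Complex_Main "HOL-Library.Landau_Symbols"
begin

definition simple_graph :: "'a set \<Rightarrow> 'a set set \<Rightarrow> bool" where
  "simple_graph V E \<longleftrightarrow> (\<forall>e\<in>E. \<exists>u v. e = {u, v} \<and> u \<noteq> v \<and> u \<in> V \<and> v \<in> V)"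

fun walk :: "'a set set \<Rightarrow> nat \<Rightarrow> 'a \<Rightarrow> 'a \<Rightarrow> bool" where
  "walk E 0 u v = (u = v)"
| "walk E (Suc k) u v = (\<exists>w. {u, w} \<in> E \<and> walk E k w v)"

definition connected_graph :: "'a set \<Rightarrow> 'a set set \<Rightarrow> bool" where
  "connected_graph V E \<longleftrightarrow> (\<forall>u\<in>V. \<forall>v\<in>V. \<exists>k. walk E k u v)"

definition degree :: "'a set set \<Rightarrow> 'a \<Rightarrow> nat" where
  "degree E v = card {u. {u, v} \<in> E}"

definition max_degree_le :: "'a set \<Rightarrow> 'a set set \<Rightarrow> nat \<Rightarrow> bool" where
  "max_degree_le V E d \<longleftrightarrow> (\<forall>v\<in>V. degree E v \<le> d)"

text \<open>Distance = number of edges on a shortest path (graph is connected when used).\<close>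
definition dist_graph :: "'a set set \<Rightarrow> 'a \<Rightarrow> 'a \<Rightarrow> nat" where
  "dist_graph E u v = (LEAST k. walk E k u v)"

text \<open>Deterministic adaptive query algorithms, modelled as decision trees:
  either output an edge set, or query the distance of a pair and branch on the answer.\<close>
datatype 'a qtree = Output "'a set set" | Query 'a 'a "nat \<Rightarrow> 'a qtree"

primrec run_output :: "'a qtree \<Rightarrow> ('a \<Rightarrow> 'a \<Rightarrow> nat) \<Rightarrow> 'a set set" where
  "run_output (Output F) orc = F"
| "run_output (Query u v f) orc = run_output (f (orc u v)) orc"

primrec run_queries :: "'a qtree \<Rightarrow> ('a \<Rightarrow> 'a \<Rightarrow> nat) \<Rightarrow> nat" where
  "run_queries (Output F) orc = 0"
| "run_queries (Query u v f) orc = Suc (run_queries (f (orc u v)) orc)"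

definition admissible :: "'a set \<Rightarrow> nat \<Rightarrow> 'a set set \<Rightarrow> bool" where
  "admissible V d E \<longleftrightarrow> simple_graph V E \<and> connected_graph V E \<and> max_degree_le V E d"

end

theory Submission
  imports Defs "HOL-Combinatorics.Permutations" "HOL-Library.FuncSet"
begin

text \<open>A decision tree whose answers lie in a set of size r and which asks at most q questions
  distinguishes at most r^q inputs. The hard instances: a binary heap tree on {0..<n}, so all
  distances are O(log n), together with k^2 perfect matchings between k "left" and k "right"
  blocks of t = n/(4k) leaves, where k = \<Delta> - 1. There are (t!)^(k^2) such graphs, all of maximum
  degree at most \<Delta>, so some graph needs log((t!)^(k^2)) / log(O(log n)) queries, which is of
  order \<Delta> n log n / log log n because k^2 t \<approx> \<Delta> n and log t \<approx> log n when \<Delta> = o(\<surd>n).\<close>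

section \<open>Decision trees\<close>

lemma card_le_pow_run_queries:
  assumes "finite R" "\<forall>h\<in>S. \<forall>u v. h u v \<in> R" "inj_on (run_output T) S"
    "\<forall>h\<in>S. run_queries T h \<le> q"
  shows "card S \<le> card R ^ q"
  using assms
proof (induction T arbitrary: S q)
  case (Output F)
  have "\<forall>x\<in>S. \<forall>y\<in>S. x = y" using Output.prems(3) by (auto simp: inj_on_def)
  then have "card S \<le> 1" by (metis card_le_Suc0_iff_eq One_nat_def card.infinite zero_le)
  moreover have "1 \<le> card R ^ q" if "h \<in> S" for h
  proof -
    have "h undefined undefined \<in> R" using Output.prems(2) that by auto
    then have "0 < card R" using Output.prems(1) card_gt_0_iff by blast
    then show ?thesis by simp
  qed
  ultimately show ?case by (cases "S = {}") auto
next
  case (Query u v f)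
  show ?case
  proof (cases "S = {}")
    case False
    with Query.prems(4) obtain q' where q: "q = Suc q'" by (cases q) auto
    define S_ans where "S_ans r = {h\<in>S. h u v = r}" for r
    have "S = (\<Union>r\<in>R. S_ans r)" using Query.prems(2) by (auto simp: S_ans_def)
    then have "card S \<le> (\<Sum>r\<in>R. card (S_ans r))" using card_UN_le[OF Query.prems(1)] by simp
    also have "\<dots> \<le> (\<Sum>r\<in>R. card R ^ q')"
    proof (rule sum_mono)
      fix r
      show "card (S_ans r) \<le> card R ^ q'"
        using Query.prems q
        by (intro Query.IH[of "f r"]) (auto simp: S_ans_def inj_on_def)
    qed
    also have "\<dots> = card R ^ q" using q by simp
    finally show ?thesis .
  qed simp
qed

lemma decision_tree_lower_bound:
  assumes "finite R" "finite F" "F \<noteq> {}" "\<forall>x\<in>F. \<forall>u v. orc x u v \<in> R"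
    and correct: "\<forall>x\<in>F. run_output T (orc x) = x"
  shows "\<exists>x\<in>F. card F \<le> card R ^ run_queries T (orc x)"
proof -
  define cost where "cost y = run_queries T (orc y)" for y
  have "Max (cost ` F) \<in> cost ` F" using assms(2,3) by (intro Max_in) auto
  then obtain x where x: "x \<in> F" "cost x = Max (cost ` F)" by auto
  have max: "cost y \<le> cost x" if "y \<in> F" for y
    using x(2) assms(2) that by simp
  have "inj_on orc F" by (metis inj_onI correct)
  then have "card F = card (orc ` F)" by (simp add: card_image)
  also have "\<dots> \<le> card R ^ run_queries T (orc x)"
    using assms(1,4) max correct
    by (intro card_le_pow_run_queries) (auto simp: inj_on_def cost_def)
  finally show ?thesis using x(1) by blast
qed

section \<open>Walks and relabelled graphs\<close>

lemma walk_mono: "walk E k u v \<Longrightarrow> E \<subseteq> E' \<Longrightarrow> walk E' k u v"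
  by (induction k arbitrary: u) auto

lemma walk_append: "walk E a u w \<Longrightarrow> walk E b w v \<Longrightarrow> walk E (a + b) u v"
  by (induction a arbitrary: u) auto

lemma walk_sym: "walk E k u v \<Longrightarrow> walk E k v u"
proof (induction k arbitrary: u)
  case (Suc k)
  then obtain w where "{u, w} \<in> E" "walk E k v w" by auto
  moreover have "{w, u} = {u, w}" by (rule insert_commute)
  ultimately show ?case using walk_append[of E k v w 1 u] by auto
qed simp

lemma walk_endpoints:
  "simple_graph V E \<Longrightarrow> walk E k u v \<Longrightarrow> (k = 0 \<and> u = v) \<or> (u \<in> V \<and> v \<in> V)"
proof (induction k arbitrary: u)
  case (Suc k)
  then obtain w where e: "{u, w} \<in> E" "walk E k w v" by auto
  from e(1) Suc.prems(1) have "u \<in> V" "w \<in> V" unfolding simple_graph_def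
    by (auto simp: doubleton_eq_iff)
  with Suc.IH[OF Suc.prems(1) e(2)] show ?case by auto
qed simp

lemma simple_graph_edge_subset:
  assumes "simple_graph V E" "e \<in> E"
  shows "e \<subseteq> V"
proof -
  obtain u v where "e = {u, v}" "u \<in> V" "v \<in> V"
    using assms unfolding simple_graph_def by blast
  then show ?thesis by simp
qed

definition relabel :: "('a \<Rightarrow> 'b) \<Rightarrow> 'a set set \<Rightarrow> 'b set set" where
  "relabel g E = (\<lambda>e. g ` e) ` E"

lemma walk_relabel: "walk E k a b \<Longrightarrow> walk (relabel g E) k (g a) (g b)"
proof (induction k arbitrary: a)
  case (Suc k)
  then obtain w where "{a, w} \<in> E" "walk E k w b" by auto
  moreover from this(1) have "{g a, g w} \<in> relabel g E"
    unfolding relabel_def by (metis image_empty image_eqI image_insert)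
  ultimately show ?case using Suc.IH by auto
qed simp

lemma simple_graph_relabel:
  assumes "simple_graph V E" "inj_on g V"
  shows "simple_graph (g ` V) (relabel g E)"
  unfolding simple_graph_def relabel_def
proof
  fix e' assume "e' \<in> (\<lambda>e. g ` e) ` E"
  then obtain e where "e \<in> E" "e' = g ` e" by auto
  then obtain u v where "e' = {g u, g v}" "u \<noteq> v" "u \<in> V" "v \<in> V"
    using assms(1) unfolding simple_graph_def by fastforce
  moreover have "g u \<noteq> g v" using assms(2) calculation(2-4) by (meson inj_onD)
  ultimately show "\<exists>u v. e' = {u, v} \<and> u \<noteq> v \<and> u \<in> g ` V \<and> v \<in> g ` V" by blast
qed

lemma neighbours_relabel:
  assumes "simple_graph V E" "inj_on g V" "x \<in> V"
  shows "{u. {u, g x} \<in> relabel g E} = g ` {y. {y, x} \<in> E}"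
proof
  show "g ` {y. {y, x} \<in> E} \<subseteq> {u. {u, g x} \<in> relabel g E}"
    unfolding relabel_def by (auto intro: rev_image_eqI)
  show "{u. {u, g x} \<in> relabel g E} \<subseteq> g ` {y. {y, x} \<in> E}"
  proof
    fix u assume "u \<in> {u. {u, g x} \<in> relabel g E}"
    then obtain e where e: "e \<in> E" "{u, g x} = g ` e" unfolding relabel_def by blast
    then obtain y z where yz: "e = {y, z}" "y \<in> V" "z \<in> V"
      using assms(1) unfolding simple_graph_def by blast
    then have "(u = g y \<and> g x = g z) \<or> (u = g z \<and> g x = g y)"
      using e(2) by (simp add: doubleton_eq_iff)
    then have "(u = g y \<and> x = z) \<or> (u = g z \<and> x = y)"
      using assms(2,3) yz(2,3) by (metis inj_onD)
    then show "u \<in> g ` {y. {y, x} \<in> E}" using e(1) yz(1) by (auto simp: insert_commute)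
  qed
qed

lemma degree_relabel:
  assumes "simple_graph V E" "inj_on g V" "x \<in> V"
  shows "degree (relabel g E) (g x) = degree E x"
proof -
  have "{y. {y, x} \<in> E} \<subseteq> V" using simple_graph_edge_subset[OF assms(1)] by blast
  then have "inj_on g {y. {y, x} \<in> E}" using assms(2) inj_on_subset by blast
  then show ?thesis unfolding degree_def neighbours_relabel[OF assms] by (simp add: card_image)
qed

lemma relabel_inj:
  assumes "inj_on g V" "simple_graph V E" "simple_graph V E'" "relabel g E = relabel g E'"
  shows "E = E'"
proof -
  have "inj_on (\<lambda>e. g ` e) (Pow V)" using assms(1) inj_on_image_Pow by blast
  moreover have "E \<subseteq> Pow V" "E' \<subseteq> Pow V" using assms(2,3) simple_graph_edge_subset by blast+
  ultimately show ?thesis using assms(4) unfolding relabel_def by (simp add: inj_on_image_eq_iff)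
qed

section \<open>The hard graphs\<close>

definition heap_edges :: "nat \<Rightarrow> nat set set" where
  "heap_edges n = {{x, (x - 1) div 2} | x. 1 \<le> x \<and> x < n}"

fun heap_depth :: "nat \<Rightarrow> nat" where
  "heap_depth x = (if x = 0 then 0 else Suc (heap_depth ((x - 1) div 2)))"
declare heap_depth.simps[simp del]

lemma walk_heap_depth: "x < n \<Longrightarrow> walk (heap_edges n) (heap_depth x) x 0"
proof (induction x rule: less_induct)
  case (less x)
  show ?case
  proof (cases "x = 0")
    case False
    then have "walk (heap_edges n) (heap_depth ((x - 1) div 2)) ((x - 1) div 2) 0"
      using less by simp
    moreover have "{x, (x - 1) div 2} \<in> heap_edges n"
      using False less.prems by (auto simp: heap_edges_def)
    ultimately show ?thesis using False by (subst heap_depth.simps) auto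
  qed (simp add: heap_depth.simps)
qed

lemma two_pow_heap_depth_le: "2 ^ heap_depth x \<le> x + 1"
proof (induction x rule: less_induct)
  case (less x)
  show ?case
  proof (cases "x = 0")
    case False
    then have "2 ^ heap_depth ((x - 1) div 2) \<le> (x - 1) div 2 + 1" using less by simp
    then have "2 * 2 ^ heap_depth ((x - 1) div 2) \<le> x + 1" using False by linarith
    then show ?thesis using False by (subst heap_depth.simps) auto
  qed (simp add: heap_depth.simps)
qed

lemma heap_depth_le_log: "x < n \<Longrightarrow> real (heap_depth x) \<le> log 2 (real n)"
proof -
  assume "x < n"
  then have "(2::real) ^ heap_depth x \<le> real n"
    using two_pow_heap_depth_le[of x] by (metis Suc_eq_plus1 Suc_leI le_trans of_nat_le_iff of_nat_numeral of_nat_power)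
  then have "log 2 ((2::real) ^ heap_depth x) \<le> log 2 (real n)" by (intro log_mono) auto
  then show ?thesis by (simp add: log_nat_power)
qed

lemma simple_graph_heap_edges: "simple_graph {..<n} (heap_edges n)"
  unfolding simple_graph_def heap_edges_def by fastforce

lemma heap_edges_neighbour:
  assumes "{u, x} \<in> heap_edges n"
  shows "u \<in> {(x - 1) div 2, 2 * x + 1, 2 * x + 2} \<and> (n div 2 \<le> x \<longrightarrow> u = (x - 1) div 2)"
proof -
  obtain y where y: "{u, x} = {y, (y - 1) div 2}" "1 \<le> y" "y < n"
    using assms by (auto simp: heap_edges_def)
  have "(y - 1) div 2 < n div 2" "y = 2 * ((y - 1) div 2) + 1 \<or> y = 2 * ((y - 1) div 2) + 2"
    using y(2,3) by linarith+
  moreover have "(u = y \<and> x = (y - 1) div 2) \<or> (u = (y - 1) div 2 \<and> x = y)"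
    using y(1) by (metis doubleton_eq_iff)
  ultimately show ?thesis by auto
qed

lemma heap_edges_has_low_vertex: "e \<in> heap_edges n \<Longrightarrow> \<exists>z\<in>e. z < n div 2"
  by (auto simp: heap_edges_def)

text \<open>The leaves n div 2, ..., n - 1 of the heap start with k left blocks of size t followed by
  k right blocks of size t; the permutation s (i, j) is a perfect matching between left block i
  and right block j.\<close>

definition left_vertex :: "nat \<Rightarrow> nat \<Rightarrow> nat \<Rightarrow> nat \<Rightarrow> nat" where
  "left_vertex n t i a = n div 2 + i * t + a"

definition right_vertex :: "nat \<Rightarrow> nat \<Rightarrow> nat \<Rightarrow> nat \<Rightarrow> nat \<Rightarrow> nat" where
  "right_vertex n k t j b = n div 2 + k * t + j * t + b"

definition matchings :: "nat \<Rightarrow> nat \<Rightarrow> (nat \<times> nat \<Rightarrow> nat \<Rightarrow> nat) set" where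
  "matchings k t = ({..<k} \<times> {..<k}) \<rightarrow>\<^sub>E {p. p permutes {..<t}}"

definition matching_edges :: "nat \<Rightarrow> nat \<Rightarrow> nat \<Rightarrow> (nat \<times> nat \<Rightarrow> nat \<Rightarrow> nat) \<Rightarrow> nat set set" where
  "matching_edges n k t s =
    {{left_vertex n t i a, right_vertex n k t j (s (i, j) a)} | i j a. i < k \<and> j < k \<and> a < t}"

definition hard_graph :: "nat \<Rightarrow> nat \<Rightarrow> nat \<Rightarrow> (nat \<times> nat \<Rightarrow> nat \<Rightarrow> nat) \<Rightarrow> nat set set" where
  "hard_graph n k t s = heap_edges n \<union> matching_edges n k t s"

definition matching_neighbours ::
  "nat \<Rightarrow> nat \<Rightarrow> nat \<Rightarrow> (nat \<times> nat \<Rightarrow> nat \<Rightarrow> nat) \<Rightarrow> nat \<Rightarrow> nat set" where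
  "matching_neighbours n k t s x =
    (if x < n div 2 + k * t
     then (\<lambda>j. right_vertex n k t j (s ((x - n div 2) div t, j) ((x - n div 2) mod t))) ` {..<k}
     else (\<lambda>i. left_vertex n t i (inv (s (i, (x - n div 2 - k * t) div t))
                                     ((x - n div 2 - k * t) mod t))) ` {..<k})"

lemma card_matching_neighbours: "card (matching_neighbours n k t s x) \<le> k"
proof -
  have "card (f ` {..<k}) \<le> k" for f :: "nat \<Rightarrow> nat"
    using card_image_le[of "{..<k}" f] by simp
  then show ?thesis by (simp add: matching_neighbours_def)
qed

lemma left_vertex_decode:
  "a < t \<Longrightarrow> (left_vertex n t i a - n div 2) div t = i \<and> (left_vertex n t i a - n div 2) mod t = a"
  by (simp add: left_vertex_def)

lemma right_vertex_decode:
  "b < t \<Longrightarrow> (right_vertex n k t j b - n div 2 - k * t) div t = j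
    \<and> (right_vertex n k t j b - n div 2 - k * t) mod t = b"
  by (simp add: right_vertex_def)

lemma block_vertex_bounds:
  assumes "n div 2 + 2 * k * t \<le> n" "i < k" "a < t" "j < k" "b < t"
  shows "n div 2 \<le> left_vertex n t i a" "left_vertex n t i a < n div 2 + k * t"
    "n div 2 + k * t \<le> right_vertex n k t j b" "right_vertex n k t j b < n"
proof -
  have "(i + 1) * t \<le> k * t" "(j + 1) * t \<le> k * t"
    using assms(2-5) by (intro mult_right_mono; simp)+
  then show "n div 2 \<le> left_vertex n t i a" "left_vertex n t i a < n div 2 + k * t"
    "n div 2 + k * t \<le> right_vertex n k t j b" "right_vertex n k t j b < n"
    using assms by (auto simp: left_vertex_def right_vertex_def algebra_simps)
qed

lemma matchings_permutes: "s \<in> matchings k t \<Longrightarrow> i < k \<Longrightarrow> j < k \<Longrightarrow> s (i, j) permutes {..<t}"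
  by (auto simp: matchings_def PiE_def Pi_def)

lemma card_matchings: "card (matchings k t) = fact t ^ (k * k)"
  using card_permutations[of "{..<t}" t]
  by (simp add: matchings_def card_PiE card_cartesian_product)

lemma finite_matchings: "finite (matchings k t)"
  unfolding matchings_def by (intro finite_PiE) (auto intro: finite_permutations)

context
  fixes n k t :: nat and s :: "nat \<times> nat \<Rightarrow> nat \<Rightarrow> nat"
  assumes blocks_fit: "n div 2 + 2 * k * t \<le> n" and s: "s \<in> matchings k t"
begin

lemma matching_lt: "i < k \<Longrightarrow> j < k \<Longrightarrow> a < t \<Longrightarrow> s (i, j) a < t"
  using matchings_permutes[OF s] permutes_in_image by fastforce

lemma simple_graph_matching_edges: "simple_graph {..<n} (matching_edges n k t s)"
  unfolding simple_graph_def matching_edges_def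
proof clarify
  fix i j a assume ija: "i < k" "j < k" "a < t"
  then have "s (i, j) a < t" by (rule matching_lt)
  note bounds = block_vertex_bounds[OF blocks_fit ija(1,3,2) this]
  show "\<exists>u v. {left_vertex n t i a, right_vertex n k t j (s (i, j) a)} = {u, v}
      \<and> u \<noteq> v \<and> u \<in> {..<n} \<and> v \<in> {..<n}"
    using bounds by (intro exI[of _ "left_vertex n t i a"] exI[of _ "right_vertex n k t j (s (i, j) a)"]) auto
qed

lemma simple_graph_hard_graph: "simple_graph {..<n} (hard_graph n k t s)"
  using simple_graph_heap_edges simple_graph_matching_edges
  by (auto simp: simple_graph_def hard_graph_def)

lemma matching_edges_neighbour:
  assumes "{u, x} \<in> matching_edges n k t s"
  shows "n div 2 \<le> x \<and> u \<in> matching_neighbours n k t s x"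
proof -
  obtain i j a where e: "{u, x} = {left_vertex n t i a, right_vertex n k t j (s (i, j) a)}"
    and ija: "i < k" "j < k" "a < t"
    using assms by (auto simp: matching_edges_def)
  have b: "s (i, j) a < t" using matching_lt ija by auto
  note bounds = block_vertex_bounds[OF blocks_fit ija(1,3,2) b]
  have "(x = left_vertex n t i a \<and> u = right_vertex n k t j (s (i, j) a))
      \<or> (x = right_vertex n k t j (s (i, j) a) \<and> u = left_vertex n t i a)"
    using e by (auto simp: doubleton_eq_iff)
  then show ?thesis
  proof
    assume "x = left_vertex n t i a \<and> u = right_vertex n k t j (s (i, j) a)"
    then show ?thesis using bounds left_vertex_decode[OF ija(3), of n i] ija(2)
      unfolding matching_neighbours_def by auto
  next
    assume x: "x = right_vertex n k t j (s (i, j) a) \<and> u = left_vertex n t i a"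
    have "inv (s (i, j)) (s (i, j) a) = a"
      using permutes_inverses(2)[OF matchings_permutes[OF s ija(1,2)]] by simp
    then show ?thesis using x bounds right_vertex_decode[OF b, of n k j] ija(1)
      unfolding matching_neighbours_def by (auto intro!: image_eqI[of _ _ i])
  qed
qed

lemma degree_hard_graph:
  assumes "2 \<le> k"
  shows "degree (hard_graph n k t s) x \<le> k + 1"
proof -
  let ?N = "{u. {u, x} \<in> hard_graph n k t s}"
  have N: "?N \<subseteq> (if x < n div 2 then {(x - 1) div 2, 2 * x + 1, 2 * x + 2}
                   else insert ((x - 1) div 2) (matching_neighbours n k t s x))"
  proof
    fix u assume "u \<in> ?N"
    then consider "{u, x} \<in> heap_edges n" | "{u, x} \<in> matching_edges n k t s"
      by (auto simp: hard_graph_def)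
    then show "u \<in> (if x < n div 2 then {(x - 1) div 2, 2 * x + 1, 2 * x + 2}
                   else insert ((x - 1) div 2) (matching_neighbours n k t s x))"
      by cases (use heap_edges_neighbour[of u x n] matching_edges_neighbour[of u x] in auto)
  qed
  show ?thesis
  proof (cases "x < n div 2")
    case True
    then have "card ?N \<le> card {(x - 1) div 2, 2 * x + 1, 2 * x + 2}"
      using N by (intro card_mono) auto
    also have "\<dots> \<le> 3" by (simp add: card_insert_if)
    finally show ?thesis using assms by (simp add: degree_def)
  next
    case False
    have fin: "finite (matching_neighbours n k t s x)" by (simp add: matching_neighbours_def)
    then have "card ?N \<le> card (insert ((x - 1) div 2) (matching_neighbours n k t s x))"
      using N False by (intro card_mono) auto
    also have "\<dots> \<le> k + 1" using fin card_matching_neighbours[of n k t s x]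
      by (simp add: card_insert_if)
    finally show ?thesis by (simp add: degree_def)
  qed
qed

lemma hard_graph_matching_edge:
  assumes "{left_vertex n t i a, right_vertex n k t j b} \<in> hard_graph n k t s"
    and "i < k" "j < k" "a < t" "b < t"
  shows "b = s (i, j) a"
proof -
  let ?e = "{left_vertex n t i a, right_vertex n k t j b}"
  have "?e \<notin> heap_edges n"
    using heap_edges_has_low_vertex[of ?e n] block_vertex_bounds[OF blocks_fit assms(2,4,3,5)] by auto
  then obtain i' j' a' where e: "?e = {left_vertex n t i' a', right_vertex n k t j' (s (i', j') a')}"
    and ija': "i' < k" "j' < k" "a' < t"
    using assms(1) by (auto simp: hard_graph_def matching_edges_def)
  have b': "s (i', j') a' < t" using matching_lt ija' by auto
  have "left_vertex n t i a = left_vertex n t i' a'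
      \<and> right_vertex n k t j b = right_vertex n k t j' (s (i', j') a')"
    using e block_vertex_bounds[OF blocks_fit assms(2,4,3,5)] block_vertex_bounds[OF blocks_fit ija'(1,3,2) b']
    by (auto simp: doubleton_eq_iff)
  then show ?thesis
    using left_vertex_decode[OF assms(4), of n i] left_vertex_decode[OF ija'(3), of n i']
      right_vertex_decode[OF assms(5), of n k j] right_vertex_decode[OF b', of n k j']
    by metis
qed

end

lemma hard_graph_inj:
  assumes blocks_fit: "n div 2 + 2 * k * t \<le> n"
    and s: "s \<in> matchings k t" and s': "s' \<in> matchings k t"
    and eq: "hard_graph n k t s = hard_graph n k t s'"
  shows "s = s'"
proof (rule PiE_ext[OF s[unfolded matchings_def] s'[unfolded matchings_def]])
  fix p assume "p \<in> {..<k} \<times> {..<k}"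
  then obtain i j where p: "p = (i, j)" "i < k" "j < k" by blast
  show "s p = s' p"
  proof
    fix a
    show "s p a = s' p a"
    proof (cases "a < t")
      case True
      have "{left_vertex n t i a, right_vertex n k t j (s (i, j) a)} \<in> hard_graph n k t s'"
        using eq p True by (auto simp: hard_graph_def matching_edges_def)
      then show ?thesis
        using hard_graph_matching_edge[OF blocks_fit s'] matching_lt[OF blocks_fit s] p True
        by simp
    next
      case False
      then show ?thesis
        using p permutes_not_in[OF matchings_permutes[OF s]] permutes_not_in[OF matchings_permutes[OF s']]
        by simp
    qed
  qed
qed

lemma walk_hard_graph:
  assumes "a < n" "b < n"
  shows "walk (hard_graph n k t s) (heap_depth a + heap_depth b) a b"
proof -
  have "walk (heap_edges n) (heap_depth a + heap_depth b) a b"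
    using walk_heap_depth[OF assms(1)] walk_sym[OF walk_heap_depth[OF assms(2)]] by (rule walk_append)
  then show ?thesis by (rule walk_mono) (auto simp: hard_graph_def)
qed

lemma admissible_relabel_hard_graph:
  assumes g: "bij_betw g {..<n} V" and blocks_fit: "n div 2 + 2 * k * t \<le> n"
    and "2 \<le> k" and s: "s \<in> matchings k t"
  shows "admissible V (k + 1) (relabel g (hard_graph n k t s))"
proof -
  let ?E = "relabel g (hard_graph n k t s)"
  have inj: "inj_on g {..<n}" and V: "V = g ` {..<n}" using g by (auto simp: bij_betw_def)
  note simple = simple_graph_hard_graph[OF blocks_fit s]
  have "connected_graph V ?E"
    unfolding connected_graph_def V using walk_relabel[OF walk_hard_graph] by blast
  moreover have "max_degree_le V ?E (k + 1)"
    unfolding max_degree_le_def V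
    using degree_relabel[OF simple inj] degree_hard_graph[OF blocks_fit s assms(3)] by auto
  ultimately show ?thesis
    using simple_graph_relabel[OF simple inj] by (simp add: admissible_def V)
qed

text \<open>dist_graph E u v is LEAST of an empty predicate when no walk joins u and v, which happens
  for pairs outside the vertex set; this junk value is one more possible oracle answer.\<close>

lemma dist_relabel_hard_graph:
  assumes g: "bij_betw g {..<n} V" and blocks_fit: "n div 2 + 2 * k * t \<le> n"
    and s: "s \<in> matchings k t" and depth: "\<forall>x<n. heap_depth x \<le> h"
  shows "dist_graph (relabel g (hard_graph n k t s)) u v \<in> insert (LEAST d. False) {..2 * h}"
proof -
  let ?E = "relabel g (hard_graph n k t s)"
  have V: "V = g ` {..<n}" using g by (auto simp: bij_betw_def)
  have simple: "simple_graph V ?E"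
    using simple_graph_relabel[OF simple_graph_hard_graph[OF blocks_fit s]] g
    by (auto simp: bij_betw_def)
  consider "u \<in> V" "v \<in> V" | "u = v" | "\<forall>j. \<not> walk ?E j u v"
    using walk_endpoints[OF simple] by blast
  then show ?thesis
  proof cases
    case 1
    then obtain a b where ab: "a < n" "b < n" "u = g a" "v = g b" using V by auto
    have "walk ?E (heap_depth a + heap_depth b) u v"
      using walk_relabel[OF walk_hard_graph[OF ab(1,2)]] ab(3,4) by simp
    then have "dist_graph ?E u v \<le> heap_depth a + heap_depth b"
      unfolding dist_graph_def by (rule Least_le)
    moreover have "heap_depth a \<le> h" "heap_depth b \<le> h" using depth ab(1,2) by auto
    ultimately show ?thesis by simp
  next
    case 2
    then show ?thesis by (simp add: dist_graph_def)
  next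
    case 3
    then show ?thesis by (simp add: dist_graph_def)
  qed
qed

lemma hard_family:
  assumes g: "bij_betw g {..<n} V" and blocks_fit: "n div 2 + 2 * k * t \<le> n"
    and "2 \<le> k" "0 < n"
  obtains F D where "finite F" "card F = fact t ^ (k * k)" "\<forall>E\<in>F. admissible V (k + 1) E"
    "\<forall>E\<in>F. \<forall>u v. dist_graph E u v \<in> insert (LEAST d. False) {..D}" "real D \<le> 2 * log 2 n"
proof
  define h where "h = Max (heap_depth ` {..<n})"
  let ?F = "(\<lambda>s. relabel g (hard_graph n k t s)) ` matchings k t"
  have "inj_on (\<lambda>s. relabel g (hard_graph n k t s)) (matchings k t)"
  proof (rule inj_onI)
    fix s s' assume s: "s \<in> matchings k t" "s' \<in> matchings k t"
      and "relabel g (hard_graph n k t s) = relabel g (hard_graph n k t s')"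
    then have "hard_graph n k t s = hard_graph n k t s'"
      using relabel_inj simple_graph_hard_graph[OF blocks_fit] g by (metis bij_betw_def)
    then show "s = s'" by (rule hard_graph_inj[OF blocks_fit s])
  qed
  then show "card ?F = fact t ^ (k * k)" by (simp add: card_image card_matchings)
  show "finite ?F" using finite_matchings by simp
  show "\<forall>E\<in>?F. admissible V (k + 1) E"
    using admissible_relabel_hard_graph[OF g blocks_fit assms(3)] by blast
  have "\<forall>x<n. heap_depth x \<le> h" unfolding h_def by simp
  then show "\<forall>E\<in>?F. \<forall>u v. dist_graph E u v \<in> insert (LEAST d. False) {..2 * h}"
    using dist_relabel_hard_graph[OF g blocks_fit] by blast
  have "h \<in> heap_depth ` {..<n}" unfolding h_def using assms(4) by (intro Max_in) auto
  then show "real (2 * h) \<le> 2 * log 2 n" using heap_depth_le_log by auto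
qed

section \<open>Estimates\<close>

lemma ln_two_bounds: "1/2 \<le> ln (2::real)" "ln (2::real) \<le> 1"
proof -
  have "exp (1/2::real) * exp (1/2) = exp 1" by (simp flip: exp_add)
  also have "\<dots> \<le> 3" by (rule exp_le)
  finally have "exp (1/2::real) ^ 2 \<le> 2 ^ 2" by (simp add: power2_eq_square)
  then have "exp (1/2::real) \<le> 2" by (rule power2_le_imp_le) simp
  then show "1/2 \<le> ln (2::real)" by (subst ln_ge_iff) auto
  show "ln (2::real) \<le> 1" using ln_le_minus_one[of 2] by simp
qed

lemma power_le_fact_add: "(m::nat) ^ r \<le> fact (m + r)"
proof (induction r)
  case (Suc r)
  have "m ^ Suc r = m * m ^ r" by simp
  also have "\<dots> \<le> Suc (m + r) * fact (m + r)" using Suc by (intro mult_mono) auto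
  also have "\<dots> = fact (m + Suc r)" by simp
  finally show ?case .
qed simp

lemma ln_fact_lower:
  assumes "2 \<le> t"
  shows "real (t - t div 2) * ln (real (t div 2)) \<le> ln (fact t)"
proof -
  have pos: "0 < real (t div 2)" using assms by simp
  have "(t div 2) ^ (t - t div 2) \<le> fact t"
    using power_le_fact_add[of "t div 2" "t - t div 2"] by simp
  then have "real ((t div 2) ^ (t - t div 2)) \<le> real (fact t)" by (simp only: of_nat_le_iff)
  then have "ln (real (t div 2) ^ (t - t div 2)) \<le> ln (fact t)"
    using pos by (subst ln_le_cancel_iff) auto
  then show ?thesis using pos by (simp add: ln_realpow)
qed

lemma real_div_lower: "real m / real n - 1 \<le> real (m div n)"
  using real_of_int_floor_gt_diff_one[of "real m / real n"] by (simp add: floor_divide_of_nat_eq)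

lemma block_size_bounds:
  fixes n k :: nat
  assumes n: "2^32 \<le> real n" and k: "2 \<le> k" "real k \<le> sqrt n"
  defines "t \<equiv> n div (4 * k)"
  shows "real k * real n / 16 \<le> real k * real k * real (t - t div 2)"
    and "ln (real n) / 4 \<le> ln (real (t div 2))"
    and "2 \<le> t"
proof -
  define sn where "sn = sqrt (real n)"
  have sn2: "sn * sn = n" and sn16: "2^16 \<le> sn"
    using n real_sqrt_le_mono[OF n] by (auto simp: sn_def real_sqrt_power_even[where n=32, simplified])
  have tlow: "real n / (4 * real k) - 1 \<le> real t"
    using real_div_lower[of n "4 * k"] unfolding t_def by simp
  have "sn * real k \<le> sn * sn" using k(2) sn16 by (intro mult_left_mono) (auto simp: sn_def)
  then have "sn / 4 \<le> real n / (4 * real k)" using sn2 k(1) by (simp add: field_simps)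
  moreover have "real t \<le> 2 * real (t div 2) + 1" and half: "real t \<le> 2 * real (t - t div 2)"
    using of_nat_mono[of t "2 * (t div 2) + 1"] of_nat_mono[of t "2 * (t - t div 2)"] by simp_all
  moreover have "16 \<le> sn" using sn16 by simp
  ultimately have msn: "sn / 16 \<le> real (t div 2)" using tlow by linarith
  then show "2 \<le> t" using \<open>16 \<le> sn\<close> by linarith
  have "8 * sn \<le> sn * sn" using sn16 by (intro mult_right_mono) auto
  then have "real k * real k \<le> real k * (real n / 8)"
    using k sn2 by (intro mult_left_mono) (auto simp: sn_def)
  moreover have "real k * real k * (real n / (4 * real k) - 1) \<le> real k * real k * (2 * real (t - t div 2))"
    using tlow half by (intro mult_left_mono) auto
  moreover have "real k * real k * (real n / (4 * real k) - 1) = real k * real n / 4 - real k * real k"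
    using k(1) by (simp add: field_simps)
  moreover have "real k * real k * (2 * real (t - t div 2)) = 2 * (real k * real k * real (t - t div 2))"
    by (simp only: ac_simps)
  ultimately show "real k * real n / 16 \<le> real k * real k * real (t - t div 2)" by linarith
  have lnn: "ln (real n) = 2 * ln sn" using n by (simp add: sn_def ln_sqrt)
  have "ln ((2::real) ^ 16) \<le> ln sn" using sn16 by (subst ln_le_cancel_iff) auto
  moreover have "ln ((2::real) ^ 16) = 16 * ln 2" "ln ((2::real) ^ 4) = 4 * ln 2"
    by (subst ln_realpow; simp)+
  moreover have "ln (sn / 16) \<le> ln (real (t div 2))" using msn sn16 by (subst ln_le_cancel_iff) auto
  ultimately show "ln (real n) / 4 \<le> ln (real (t div 2))"
    using lnn ln_two_bounds sn16 by (simp add: ln_div)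
qed

lemma ln_answers_bound:
  assumes L: "16 \<le> ln (real n)" and D: "real D \<le> 2 * log 2 (real n)"
  shows "ln (real D + 2) \<le> 2 * ln (ln (real n))"
proof -
  have "log 2 (real n) = ln (real n) / ln 2" by (simp add: log_def)
  also have "\<dots> \<le> ln (real n) / (1/2)" using ln_two_bounds L by (intro divide_left_mono) auto
  finally have "log 2 (real n) \<le> 2 * ln (real n)" by simp
  then have "real D + 2 \<le> 5 * ln (real n)" using D L by linarith
  also have "\<dots> \<le> ln (real n) ^ 2" using L by (simp add: power2_eq_square mult_right_mono)
  finally have "ln (real D + 2) \<le> ln (ln (real n) ^ 2)" by (subst ln_le_cancel_iff) auto
  also have "\<dots> = 2 * ln (ln (real n))" using L by (subst ln_realpow) auto
  finally show ?thesis .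
qed

lemma queries_lower_bound:
  fixes n \<Delta> D q :: nat
  assumes n: "2^32 \<le> real n" and \<Delta>: "3 \<le> \<Delta>" "real \<Delta> \<le> sqrt (real n)"
    and D: "real D \<le> 2 * log 2 (real n)"
    and count: "fact (n div (4 * (\<Delta> - 1))) ^ ((\<Delta> - 1) * (\<Delta> - 1)) \<le> (D + 2) ^ q"
  shows "1/256 * real \<Delta> * real n * ln (real n) / ln (ln (real n)) \<le> real q"
proof -
  define k where "k = \<Delta> - 1"
  define t where "t = n div (4 * k)"
  have k: "2 \<le> k" "real k \<le> sqrt (real n)" "real \<Delta> \<le> 2 * real k" using \<Delta> by (auto simp: k_def)
  note blocks = block_size_bounds[OF n k(1,2), folded t_def]
  have "ln ((2::real) ^ 32) \<le> ln (real n)" using n by (subst ln_le_cancel_iff) auto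
  moreover have "ln ((2::real) ^ 32) = 32 * ln 2" by (subst ln_realpow; simp)
  ultimately have L: "16 \<le> ln (real n)" using ln_two_bounds by linarith
  have "real (fact t ^ (k * k)) \<le> real ((D + 2) ^ q)" using count by (simp only: k_def t_def of_nat_le_iff)
  then have "ln (fact t ^ (k * k)) \<le> ln (real (D + 2) ^ q)" by (subst ln_le_cancel_iff) auto
  then have upper: "real k * real k * ln (fact t) \<le> real q * ln (real D + 2)"
    by (simp add: ln_realpow add.commute)
  have "real \<Delta> * (real n * ln (real n)) \<le> (2 * real k) * (real n * ln (real n))"
    using k(3) L by (intro mult_right_mono) auto
  then have "real \<Delta> * real n * ln (real n) / 128 \<le> (real k * real n / 16) * (ln (real n) / 4)"
    by (simp add: field_simps)
  also have "\<dots> \<le> (real k * real k * real (t - t div 2)) * ln (real (t div 2))"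
    using blocks(1,2) L by (intro mult_mono) auto
  also have "\<dots> \<le> real k * real k * ln (fact t)"
    using ln_fact_lower[OF blocks(3)] by (simp add: mult.assoc mult_left_mono)
  finally have lower: "real \<Delta> * real n * ln (real n) / 128 \<le> real k * real k * ln (fact t)" .
  define X where "X = 1/256 * real \<Delta> * real n * ln (real n) / ln (ln (real n))"
  have lnln: "0 < ln (ln (real n))" using L by simp
  have "X * ln (real D + 2) \<le> X * (2 * ln (ln (real n)))"
    using ln_answers_bound[OF L D] L lnln by (intro mult_left_mono) (auto simp: X_def)
  also have "\<dots> = real \<Delta> * real n * ln (real n) / 128" using lnln by (simp add: X_def)
  finally have "X * ln (real D + 2) \<le> real q * ln (real D + 2)" using lower upper by linarith
  then show ?thesis unfolding X_def[symmetric] by (rule mult_right_le_imp_le) simp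
qed

lemma leaf_blocks_fit: "n div 2 + 2 * k * (n div (4 * k)) \<le> (n::nat)"
proof -
  have "n div (4 * k) * (4 * k) \<le> n" by (rule div_times_less_eq_dividend)
  then have "2 * k * (n div (4 * k)) \<le> n div 2" by (simp add: algebra_simps)
  then show ?thesis by linarith
qed

lemma many_queries_needed:
  fixes n \<Delta> :: nat and V :: "'a set"
  assumes n: "2^32 \<le> real n" and \<Delta>: "3 \<le> \<Delta>" "real \<Delta> \<le> sqrt (real n)" and V: "card V = n"
    and correct: "\<forall>E. admissible V \<Delta> E \<longrightarrow> run_output T (dist_graph E) = E"
  shows "\<exists>E. admissible V \<Delta> E \<and>
    1/256 * real \<Delta> * real n * ln (real n) / ln (ln (real n)) \<le> real (run_queries T (dist_graph E))"
proof -
  have "0 < n" using n by (simp add: numeral_le_real_of_nat_iff)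
  then have "finite V" using V card_gt_0_iff by blast
  then obtain g where g: "bij_betw g {..<n} V"
    using ex_bij_betw_nat_finite V by (metis atLeast0LessThan)
  define k where "k = \<Delta> - 1"
  have k: "\<Delta> = k + 1" "2 \<le> k" using \<Delta>(1) by (simp_all add: k_def)
  obtain F D where F: "finite F" "card F = fact (n div (4 * k)) ^ (k * k)"
    "\<forall>E\<in>F. admissible V \<Delta> E" "\<forall>E\<in>F. \<forall>u v. dist_graph E u v \<in> insert (LEAST d. False) {..D}"
    "real D \<le> 2 * log 2 n"
    using hard_family[OF g leaf_blocks_fit k(2) \<open>0 < n\<close>] k(1) by metis
  let ?R = "insert (LEAST d. False) {..D}"
  have "F \<noteq> {}" using F(2) by auto
  moreover have "\<forall>E\<in>F. run_output T (dist_graph E) = E" using correct F(3) by simp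
  ultimately obtain E where E: "E \<in> F" "card F \<le> card ?R ^ run_queries T (dist_graph E)"
    using decision_tree_lower_bound[of ?R F dist_graph T] F(1,4) by blast
  have "card ?R \<le> D + 2" by (simp add: card_insert_if)
  then have "fact (n div (4 * (\<Delta> - 1))) ^ ((\<Delta> - 1) * (\<Delta> - 1)) \<le> (D + 2) ^ run_queries T (dist_graph E)"
    using order_trans[OF E(2) power_mono] F(2) by (simp add: k_def)
  then show ?thesis using queries_lower_bound[OF n \<Delta> F(5)] E(1) F(3) by blast
qed

theorem theorem4:
  fixes \<Delta> :: "nat \<Rightarrow> nat"
  assumes "\<forall>n. \<Delta> n \<ge> 3"
    and "(\<lambda>n. real (\<Delta> n)) \<in> o(\<lambda>n. sqrt (real n))"
  shows "\<exists>c>0. \<exists>N. \<forall>n\<ge>N. \<forall>(V::nat set) (T::nat qtree).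
           card V = n \<longrightarrow>
           (\<forall>E. admissible V (\<Delta> n) E \<longrightarrow> run_output T (dist_graph E) = E) \<longrightarrow>
           (\<exists>E. admissible V (\<Delta> n) E \<and>
                real (run_queries T (dist_graph E))
                  \<ge> c * real (\<Delta> n) * real n * ln (real n) / ln (ln (real n)))"
proof -
  have "eventually (\<lambda>n. norm (real (\<Delta> n)) \<le> 1 * norm (sqrt (real n))) at_top"
    by (rule landau_o.smallD[OF assms(2)]) simp
  then obtain N where N: "\<And>n. N \<le> n \<Longrightarrow> real (\<Delta> n) \<le> sqrt (real n)"
    by (auto simp: eventually_at_top_linorder)
  show ?thesis
  proof (intro exI[of _ "1/256"] conjI exI[of _ "max N (2^32)"] allI impI)
    fix n V T
    assume "max N (2^32) \<le> n" "card V = n"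
      "\<forall>E. admissible V (\<Delta> n) E \<longrightarrow> run_output T (dist_graph E) = E"
    then show "\<exists>E. admissible V (\<Delta> n) E \<and>
        1/256 * real (\<Delta> n) * real n * ln (real n) / ln (ln (real n)) \<le> real (run_queries T (dist_graph E))"
      using assms(1) N by (intro many_queries_needed) (simp_all add: numeral_le_real_of_nat_iff)
  qed simp
qed

end
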